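(* Let $\mathbb{C}^{\mathbb{N}}$ be the Fréchet algebra of all complex sequences with pointwise multiplication and the product topology, and let $\mathcal{U}$ be a countably incomplete $\aleph(\mathbb{C}^{\mathbb{N}})^+$-good ultrafilter on an index set $I$. Then $(\mathbb{C}^{\mathbb{N}})_{\mathcal{U}}$ is isomorphic (as a Fréchet algebra) to $\mathbb{C}^{\mathbb{N}}$, has the approximation property, and is contractible.
   Context: For a Fréchet algebra $(\mathcal{A},(P_n))$ the ultrapower $(\mathcal{A})_{\mathcal{U}}=\ell_\infty(I,\mathcal{A})/\mathcal{N}_{\mathcal{U}}$ ($\ell_\infty$: families with $\sup_iP_n(x_i)<\infty$ for all $n$; $\mathcal{N}_{\mathcal{U}}$: those with $\lim_{\mathcal{U}}P_n(x_i)=0$ for all $n$), with seminorms $\lim_{\mathcal{U}}P_n(x_i)$ and coordinatewise product. A Fréchet algebra is contractible if it has a diagonal: $T\in\mathcal{A}\hat\otimes\mathcal{A}$ (completed projective tensor product) with $\Delta_{\mathcal{A}}(T)a=a$ and $a\cdot T=T\cdot a$ for all $a$, where $\Delta_{\mathcal{A}}(a\otimes b)=ab$, $a\cdot(b\otimes c)=ab\otimes c$, $(b\otimes c)\cdot a=b\otimes ca$. $\aleph(E)=\max(\aleph_U(E),\aleph_B(E))$ (least cardinalities of a zero-neighbourhood base and of a fundamental family of bounded sets); in this paper $\aleph^+=2^\aleph$. $\mathcal{U}$ is $\aleph$-good if for each cardinal $\beta\le\aleph$ and every monotonic $f:P_f(\beta)\to\mathcal{U}$ there is an additive $g:P_f(\beta)\to\mathcal{U}$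 with $g(u)\subseteq f(u)$ for all $u$ (monotonic: $u\subseteq w\Rightarrow f(u)\supseteq f(w)$; additive: $g(u\cup w)=g(u)\cap g(w)$). Approximation property: continuous finite rank operators are dense in the continuous operators for uniform convergence on precompact sets. *)

theory Defs
  imports "HOL-Analysis.Analysis" "HOL-Library.Equipollence"
begin

section \<open>Complex locally convex (Frechet) algebras given by a sequence of seminorms\<close>

record 'a fa =
  fa_carrier :: "'a set"
  fa_add :: "'a \<Rightarrow> 'a \<Rightarrow> 'a"
  fa_smul :: "complex \<Rightarrow> 'a \<Rightarrow> 'a"
  fa_zero :: "'a"
  fa_mul :: "'a \<Rightarrow> 'a \<Rightarrow> 'a"
  fa_sn :: "nat \<Rightarrow> 'a \<Rightarrow> real"

definition fa_sub :: "'a fa \<Rightarrow> 'a \<Rightarrow> 'a \<Rightarrow> 'a" where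
  "fa_sub A x y = fa_add A x (fa_smul A (-1) y)"

primrec fa_psum :: "'a fa \<Rightarrow> (nat \<Rightarrow> 'a) \<Rightarrow> nat \<Rightarrow> 'a" where
  "fa_psum A f 0 = fa_zero A"
| "fa_psum A f (Suc n) = fa_add A (fa_psum A f n) (f n)"

definition fa_sums :: "'a fa \<Rightarrow> (nat \<Rightarrow> 'a) \<Rightarrow> 'a \<Rightarrow> bool" where
  "fa_sums A f s \<longleftrightarrow> s \<in> fa_carrier A \<and>
     (\<forall>n. (\<lambda>N. fa_sn A n (fa_sub A (fa_psum A f N) s)) \<longlonglongrightarrow> 0)"

primrec fa_lc :: "'a fa \<Rightarrow> (complex \<times> 'a) list \<Rightarrow> 'a" where
  "fa_lc A [] = fa_zero A"
| "fa_lc A (p # ps) = fa_add A (fa_smul A (fst p) (snd p)) (fa_lc A ps)"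

definition fa_span :: "'a fa \<Rightarrow> 'a set \<Rightarrow> 'a set" where
  "fa_span A F = {fa_lc A ps | ps. set (map snd ps) \<subseteq> F}"

definition fa_linear :: "'a fa \<Rightarrow> 'b fa \<Rightarrow> ('a \<Rightarrow> 'b) \<Rightarrow> bool" where
  "fa_linear A B T \<longleftrightarrow> (\<forall>x\<in>fa_carrier A. T x \<in> fa_carrier B) \<and>
     (\<forall>x\<in>fa_carrier A. \<forall>y\<in>fa_carrier A. T (fa_add A x y) = fa_add B (T x) (T y)) \<and>
     (\<forall>c. \<forall>x\<in>fa_carrier A. T (fa_smul A c x) = fa_smul B c (T x))"

definition fa_cont :: "'a fa \<Rightarrow> 'b fa \<Rightarrow> ('a \<Rightarrow> 'b) \<Rightarrow> bool" where
  "fa_cont A B T \<longleftrightarrow> (\<forall>n. \<exists>M C. finite M \<and>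
     (\<forall>x\<in>fa_carrier A. fa_sn B n (T x) \<le> C * (\<Sum>m\<in>M. fa_sn A m x)))"

definition fa_isomorphic :: "'a fa \<Rightarrow> 'b fa \<Rightarrow> bool" where
  "fa_isomorphic A B \<longleftrightarrow> (\<exists>\<Phi>. bij_betw \<Phi> (fa_carrier A) (fa_carrier B) \<and> fa_linear A B \<Phi> \<and>
     (\<forall>x\<in>fa_carrier A. \<forall>y\<in>fa_carrier A. \<Phi> (fa_mul A x y) = fa_mul B (\<Phi> x) (\<Phi> y)) \<and>
     fa_cont A B \<Phi> \<and> fa_cont B A (inv_into (fa_carrier A) \<Phi>))"

definition fa_cont_op :: "'a fa \<Rightarrow> ('a \<Rightarrow> 'a) \<Rightarrow> bool" where
  "fa_cont_op A T \<longleftrightarrow> fa_linear A A T \<and> fa_cont A A T"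

definition fa_finite_rank :: "'a fa \<Rightarrow> ('a \<Rightarrow> 'a) \<Rightarrow> bool" where
  "fa_finite_rank A T \<longleftrightarrow> (\<exists>F. finite F \<and> F \<subseteq> fa_carrier A \<and> T ` fa_carrier A \<subseteq> fa_span A F)"

definition fa_precompact :: "'a fa \<Rightarrow> 'a set \<Rightarrow> bool" where
  "fa_precompact A K \<longleftrightarrow> K \<subseteq> fa_carrier A \<and>
     (\<forall>N \<epsilon>. finite N \<and> \<epsilon> > 0 \<longrightarrow> (\<exists>F. finite F \<and> F \<subseteq> fa_carrier A \<and>
        K \<subseteq> (\<Union>x\<in>F. {y \<in> fa_carrier A. \<forall>n\<in>N. fa_sn A n (fa_sub A y x) < \<epsilon>})))"

definition has_AP :: "'a fa \<Rightarrow> bool" where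
  "has_AP A \<longleftrightarrow> (\<forall>T K N \<epsilon>. fa_cont_op A T \<and> fa_precompact A K \<and> finite N \<and> \<epsilon> > 0 \<longrightarrow>
     (\<exists>F. fa_cont_op A F \<and> fa_finite_rank A F \<and>
        (\<forall>x\<in>K. \<forall>n\<in>N. fa_sn A n (fa_sub A (T x) (F x)) < \<epsilon>)))"

text \<open>Jointly continuous bilinear forms on A x A (= the dual of the completed projective
  tensor product).\<close>
definition fa_cont_bilinear :: "'a fa \<Rightarrow> ('a \<Rightarrow> 'a \<Rightarrow> complex) \<Rightarrow> bool" where
  "fa_cont_bilinear A \<beta> \<longleftrightarrow>
     (\<forall>x\<in>fa_carrier A. \<forall>y\<in>fa_carrier A. \<forall>z\<in>fa_carrier A.
        \<beta> (fa_add A x y) z = \<beta> x z + \<beta> y z \<and> \<beta> z (fa_add A x y) = \<beta> z x + \<beta> z y) \<and>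
     (\<forall>c. \<forall>x\<in>fa_carrier A. \<forall>y\<in>fa_carrier A.
        \<beta> (fa_smul A c x) y = c * \<beta> x y \<and> \<beta> x (fa_smul A c y) = c * \<beta> x y) \<and>
     (\<exists>M C. finite M \<and> (\<forall>x\<in>fa_carrier A. \<forall>y\<in>fa_carrier A.
        cmod (\<beta> x y) \<le> C * (\<Sum>m\<in>M. fa_sn A m x) * (\<Sum>m\<in>M. fa_sn A m y)))"

text \<open>An element T of the completed projective tensor product A \<otimes> A is represented
  (Grothendieck) as an absolutely convergent series \<Sum>k x_k \<otimes> y_k; its image under
  \<Delta> is \<Sum>k x_k y_k, and two such elements agree iff all continuous bilinear forms agree on them.
  A diagonal: \<Delta>(T) a = a and a\<cdot>T = T\<cdot>a for all a.\<close>
definition fa_contractible :: "'a fa \<Rightarrow> bool" where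
  "fa_contractible A \<longleftrightarrow> (\<exists>x y :: nat \<Rightarrow> 'a.
     (\<forall>k. x k \<in> fa_carrier A \<and> y k \<in> fa_carrier A) \<and>
     (\<forall>m n. summable (\<lambda>k. fa_sn A m (x k) * fa_sn A n (y k))) \<and>
     (\<exists>d. fa_sums A (\<lambda>k. fa_mul A (x k) (y k)) d \<and> (\<forall>a\<in>fa_carrier A. fa_mul A d a = a)) \<and>
     (\<forall>a\<in>fa_carrier A. \<forall>\<beta>. fa_cont_bilinear A \<beta> \<longrightarrow>
        (\<lambda>k. \<beta> (fa_mul A a (x k)) (y k) - \<beta> (x k) (fa_mul A (y k) a)) sums 0))"

definition CN :: "(nat \<Rightarrow> complex) fa" where
  "CN = \<lparr> fa_carrier = UNIV,
          fa_add = (\<lambda>x y k. x k + y k),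
          fa_smul = (\<lambda>c x k. c * x k),
          fa_zero = (\<lambda>k. 0),
          fa_mul = (\<lambda>x y k. x k * y k),
          fa_sn = (\<lambda>n x. Max ((\<lambda>k. cmod (x k)) ` {..n})) \<rparr>"

section \<open>Ultrafilters and ultrapowers\<close>

definition ultrafilter_on :: "'i set set \<Rightarrow> bool" where
  "ultrafilter_on U \<longleftrightarrow> {} \<notin> U \<and> UNIV \<in> U \<and>
     (\<forall>X Y. X \<in> U \<and> X \<subseteq> Y \<longrightarrow> Y \<in> U) \<and>
     (\<forall>X Y. X \<in> U \<and> Y \<in> U \<longrightarrow> X \<inter> Y \<in> U) \<and>
     (\<forall>X. X \<in> U \<or> - X \<in> U)"

definition countably_incomplete :: "'i set set \<Rightarrow> bool" where
  "countably_incomplete U \<longleftrightarrow> (\<exists>S :: nat \<Rightarrow> 'i set. (\<forall>n. S n \<in> U) \<and> (\<Inter>n. S n) = {})"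

definition Ulim :: "'i set set \<Rightarrow> ('i \<Rightarrow> real) \<Rightarrow> real \<Rightarrow> bool" where
  "Ulim U a L \<longleftrightarrow> (\<forall>\<epsilon>>0. {i. \<bar>a i - L\<bar> < \<epsilon>} \<in> U)"

definition ulim :: "'i set set \<Rightarrow> ('i \<Rightarrow> real) \<Rightarrow> real" where
  "ulim U a = (THE L. Ulim U a L)"

definition linf :: "'a fa \<Rightarrow> ('i \<Rightarrow> 'a) set" where
  "linf A = {x. (\<forall>i. x i \<in> fa_carrier A) \<and> (\<forall>n. bdd_above (range (\<lambda>i. fa_sn A n (x i))))}"

definition urel :: "'a fa \<Rightarrow> 'i set set \<Rightarrow> (('i \<Rightarrow> 'a) \<times> ('i \<Rightarrow> 'a)) set" where
  "urel A U = {(x, y). x \<in> linf A \<and> y \<in> linf A \<and>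
     (\<forall>n. Ulim U (\<lambda>i. fa_sn A n (fa_sub A (x i) (y i))) 0)}"

definition ucls :: "'a fa \<Rightarrow> 'i set set \<Rightarrow> ('i \<Rightarrow> 'a) \<Rightarrow> ('i \<Rightarrow> 'a) set" where
  "ucls A U x = urel A U `` {x}"

definition urep :: "('i \<Rightarrow> 'a) set \<Rightarrow> 'i \<Rightarrow> 'a" where
  "urep X = (SOME x. x \<in> X)"

definition upow :: "'a fa \<Rightarrow> 'i set set \<Rightarrow> ('i \<Rightarrow> 'a) set fa" where
  "upow A U = \<lparr> fa_carrier = linf A // urel A U,
     fa_add = (\<lambda>X Y. ucls A U (\<lambda>i. fa_add A (urep X i) (urep Y i))),
     fa_smul = (\<lambda>c X. ucls A U (\<lambda>i. fa_smul A c (urep X i))),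
     fa_zero = ucls A U (\<lambda>i. fa_zero A),
     fa_mul = (\<lambda>X Y. ucls A U (\<lambda>i. fa_mul A (urep X i) (urep Y i))),
     fa_sn = (\<lambda>n X. ulim U (\<lambda>i. fa_sn A n (urep X i))) \<rparr>"

section \<open>Cardinal invariants and good ultrafilters\<close>

definition fa_zero_nbhd :: "'a fa \<Rightarrow> 'a set \<Rightarrow> bool" where
  "fa_zero_nbhd A W \<longleftrightarrow> W \<subseteq> fa_carrier A \<and> (\<exists>N \<epsilon>. finite N \<and> \<epsilon> > 0 \<and>
     {x \<in> fa_carrier A. \<forall>n\<in>N. fa_sn A n x < \<epsilon>} \<subseteq> W)"

definition fa_nbhd_base :: "'a fa \<Rightarrow> 'a set set \<Rightarrow> bool" where
  "fa_nbhd_base A V \<longleftrightarrow> (\<forall>W\<in>V. fa_zero_nbhd A W) \<and>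
     (\<forall>W. fa_zero_nbhd A W \<longrightarrow> (\<exists>W'\<in>V. W' \<subseteq> W))"

definition fa_bounded :: "'a fa \<Rightarrow> 'a set \<Rightarrow> bool" where
  "fa_bounded A S \<longleftrightarrow> S \<subseteq> fa_carrier A \<and> (\<forall>n. bdd_above (fa_sn A n ` S))"

definition fa_fund_bounded :: "'a fa \<Rightarrow> 'a set set \<Rightarrow> bool" where
  "fa_fund_bounded A Bd \<longleftrightarrow> (\<forall>S\<in>Bd. fa_bounded A S) \<and>
     (\<forall>S. fa_bounded A S \<longrightarrow> (\<exists>S'\<in>Bd. S \<subseteq> S'))"

text \<open>Minimal-cardinality witnesses of aleph_U and aleph_B.\<close>
definition min_nbhd_base :: "'a fa \<Rightarrow> 'a set set \<Rightarrow> bool" where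
  "min_nbhd_base A V \<longleftrightarrow> fa_nbhd_base A V \<and> (\<forall>V'. fa_nbhd_base A V' \<longrightarrow> V \<lesssim> V')"

definition min_fund_bounded :: "'a fa \<Rightarrow> 'a set set \<Rightarrow> bool" where
  "min_fund_bounded A Bd \<longleftrightarrow> fa_fund_bounded A Bd \<and> (\<forall>Bd'. fa_fund_bounded A Bd' \<longrightarrow> Bd \<lesssim> Bd')"

definition good_for :: "'i set set \<Rightarrow> 'b set \<Rightarrow> bool" where
  "good_for U B \<longleftrightarrow> (\<forall>f :: 'b set \<Rightarrow> 'i set.
     ((\<forall>u. finite u \<and> u \<subseteq> B \<longrightarrow> f u \<in> U) \<and>
      (\<forall>u w. finite w \<and> w \<subseteq> B \<and> u \<subseteq> w \<longrightarrow> f w \<subseteq> f u)) \<longrightarrow>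
     (\<exists>g :: 'b set \<Rightarrow> 'i set.
        (\<forall>u. finite u \<and> u \<subseteq> B \<longrightarrow> g u \<in> U \<and> g u \<subseteq> f u) \<and>
        (\<forall>u w. finite u \<and> u \<subseteq> B \<and> finite w \<and> w \<subseteq> B \<longrightarrow> g (u \<union> w) = g u \<inter> g w)))"

text \<open>U is aleph(A)^+-good, where aleph = max(aleph_U, aleph_B) and aleph^+ = 2^aleph:
  the goodness condition holds for every cardinal \<le> 2^aleph, i.e. for every set of
  cardinality \<le> 2^aleph_U or \<le> 2^aleph_B; all such cardinals are represented by subsets of
  Pow V resp. Pow Bd for minimal witnesses V, Bd.\<close>
definition aleph_plus_good :: "'a fa \<Rightarrow> 'i set set \<Rightarrow> bool" where
  "aleph_plus_good A U \<longleftrightarrow>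
     (\<forall>V. min_nbhd_base A V \<longrightarrow> (\<forall>B. B \<subseteq> Pow V \<longrightarrow> good_for U B)) \<and>
     (\<forall>Bd. min_fund_bounded A Bd \<longrightarrow> (\<forall>B. B \<subseteq> Pow Bd \<longrightarrow> good_for U B))"

end

(* Each seminorm of CN sees only finitely many coordinates, and a bounded family of complex
   numbers converges along an ultrafilter.  The approximation property and
   contractibility pass along isometric isomorphisms, and CN has both: truncations are continuous
   finite-rank operators that approximate every operator in each seminorm, and the unit vectors
   e_k give the diagonal \<Sum>_k e_k \<otimes> e_k. *)

theory Submission
  imports Defs
begin

section \<open>Isometric isomorphisms of seminormed algebras\<close>

locale fa_isometric_iso =
  fixes A :: "'a fa" and B :: "'b fa" and \<phi> :: "'a \<Rightarrow> 'b" and \<psi> :: "'b \<Rightarrow> 'a"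
  assumes maps_to: "\<And>x. x \<in> fa_carrier A \<Longrightarrow> \<phi> x \<in> fa_carrier B"
    and inv_maps_to: "\<And>y. y \<in> fa_carrier B \<Longrightarrow> \<psi> y \<in> fa_carrier A"
    and inv_left: "\<And>x. x \<in> fa_carrier A \<Longrightarrow> \<psi> (\<phi> x) = x"
    and inv_right: "\<And>y. y \<in> fa_carrier B \<Longrightarrow> \<phi> (\<psi> y) = y"
    and zero_closed: "fa_zero A \<in> fa_carrier A"
    and add_closed: "\<And>x y. \<lbrakk>x \<in> fa_carrier A; y \<in> fa_carrier A\<rbrakk> \<Longrightarrow> fa_add A x y \<in> fa_carrier A"
    and smul_closed: "\<And>x c. x \<in> fa_carrier A \<Longrightarrow> fa_smul A c x \<in> fa_carrier A"
    and mul_closed: "\<And>x y. \<lbrakk>x \<in> fa_carrier A; y \<in> fa_carrier A\<rbrakk> \<Longrightarrow> fa_mul A x y \<in> fa_carrier A"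
    and map_zero: "\<phi> (fa_zero A) = fa_zero B"
    and map_add: "\<And>x y. \<lbrakk>x \<in> fa_carrier A; y \<in> fa_carrier A\<rbrakk> \<Longrightarrow>
      \<phi> (fa_add A x y) = fa_add B (\<phi> x) (\<phi> y)"
    and map_smul: "\<And>x c. x \<in> fa_carrier A \<Longrightarrow> \<phi> (fa_smul A c x) = fa_smul B c (\<phi> x)"
    and map_mul: "\<And>x y. \<lbrakk>x \<in> fa_carrier A; y \<in> fa_carrier A\<rbrakk> \<Longrightarrow>
      \<phi> (fa_mul A x y) = fa_mul B (\<phi> x) (\<phi> y)"
    and map_sn: "\<And>x n. x \<in> fa_carrier A \<Longrightarrow> fa_sn B n (\<phi> x) = fa_sn A n x"
begin

lemma inverse: "fa_isometric_iso B A \<psi> \<phi>"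
proof
  fix y y' assume y: "y \<in> fa_carrier B" and y': "y' \<in> fa_carrier B"
  have B_eq: "fa_add B y y' = \<phi> (fa_add A (\<psi> y) (\<psi> y'))" "fa_mul B y y' = \<phi> (fa_mul A (\<psi> y) (\<psi> y'))"
    using y y' by (simp_all add: map_add map_mul inv_maps_to inv_right)
  show "fa_add B y y' \<in> fa_carrier B" "fa_mul B y y' \<in> fa_carrier B"
    unfolding B_eq by (simp_all add: maps_to add_closed mul_closed inv_maps_to y y')
  show "\<psi> (fa_add B y y') = fa_add A (\<psi> y) (\<psi> y')" "\<psi> (fa_mul B y y') = fa_mul A (\<psi> y) (\<psi> y')"
    unfolding B_eq by (simp_all add: inv_left add_closed mul_closed inv_maps_to y y')
next
  fix y c assume y: "y \<in> fa_carrier B"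
  have B_eq: "fa_smul B c y = \<phi> (fa_smul A c (\<psi> y))"
    using y by (simp add: map_smul inv_maps_to inv_right)
  show "fa_smul B c y \<in> fa_carrier B" "\<psi> (fa_smul B c y) = fa_smul A c (\<psi> y)"
    unfolding B_eq by (simp_all add: maps_to smul_closed inv_left inv_maps_to y)
next
  show "fa_zero B \<in> fa_carrier B" "\<psi> (fa_zero B) = fa_zero A"
    using map_zero maps_to zero_closed inv_left by metis+
  show "fa_sn A n (\<psi> y) = fa_sn B n y" if "y \<in> fa_carrier B" for n y
    using that map_sn inv_maps_to inv_right by metis
qed (simp_all add: maps_to inv_maps_to inv_left inv_right)

lemma sub_closed: "\<lbrakk>x \<in> fa_carrier A; y \<in> fa_carrier A\<rbrakk> \<Longrightarrow> fa_sub A x y \<in> fa_carrier A"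
  by (simp add: fa_sub_def add_closed smul_closed)

lemma map_sub: "\<lbrakk>x \<in> fa_carrier A; y \<in> fa_carrier A\<rbrakk> \<Longrightarrow> \<phi> (fa_sub A x y) = fa_sub B (\<phi> x) (\<phi> y)"
  by (simp add: fa_sub_def map_add map_smul smul_closed)

lemma sn_sub: "\<lbrakk>x \<in> fa_carrier A; y \<in> fa_carrier A\<rbrakk> \<Longrightarrow>
    fa_sn B n (fa_sub B (\<phi> x) (\<phi> y)) = fa_sn A n (fa_sub A x y)"
  by (simp add: map_sub [symmetric] map_sn sub_closed)

lemma lc_closed_and_map_lc:
  assumes "set (map snd ps) \<subseteq> fa_carrier A"
  shows "fa_lc A ps \<in> fa_carrier A \<and> \<phi> (fa_lc A ps) = fa_lc B (map (\<lambda>(c, x). (c, \<phi> x)) ps)"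
  using assms
  by (induction ps) (auto simp: zero_closed map_zero add_closed smul_closed map_add map_smul)

lemma psum_closed_and_map_psum:
  assumes "\<And>k. f k \<in> fa_carrier A"
  shows "fa_psum A f N \<in> fa_carrier A \<and> \<phi> (fa_psum A f N) = fa_psum B (\<lambda>k. \<phi> (f k)) N"
  using assms by (induction N) (auto simp: zero_closed map_zero add_closed map_add)

lemma isomorphic: "fa_isomorphic A B"
proof -
  have bij: "bij_betw \<phi> (fa_carrier A) (fa_carrier B)"
    by (rule bij_betwI[where g = \<psi>]) (auto simp: maps_to inv_maps_to inv_left inv_right)
  have inv_into_eq: "inv_into (fa_carrier A) \<phi> y = \<psi> y" if "y \<in> fa_carrier B" for y
    using that bij_betw_imp_inj_on[OF bij]
    by (intro inv_into_f_eq) (auto simp: inv_maps_to inv_right)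
  have "fa_cont A B \<phi>"
    unfolding fa_cont_def
  proof
    fix n
    show "\<exists>M C. finite M \<and> (\<forall>x\<in>fa_carrier A. fa_sn B n (\<phi> x) \<le> C * (\<Sum>m\<in>M. fa_sn A m x))"
      by (rule exI[of _ "{n}"], rule exI[of _ 1]) (simp add: map_sn)
  qed
  moreover have "fa_cont B A (inv_into (fa_carrier A) \<phi>)"
    unfolding fa_cont_def
  proof
    fix n
    show "\<exists>M C. finite M \<and> (\<forall>y\<in>fa_carrier B.
        fa_sn A n (inv_into (fa_carrier A) \<phi> y) \<le> C * (\<Sum>m\<in>M. fa_sn B m y))"
      by (rule exI[of _ "{n}"], rule exI[of _ 1])
        (simp add: inv_into_eq fa_isometric_iso.map_sn[OF inverse])
  qed
  moreover have "fa_linear A B \<phi>"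
    by (simp add: fa_linear_def maps_to map_add map_smul)
  ultimately show ?thesis
    unfolding fa_isomorphic_def using bij map_mul by blast
qed

lemma cont_op_conj:
  assumes "fa_cont_op A T"
  shows "fa_cont_op B (\<lambda>y. \<phi> (T (\<psi> y)))"
proof -
  have lin: "fa_linear A A T" and cont: "fa_cont A A T"
    using assms by (auto simp: fa_cont_op_def)
  have T_in: "T x \<in> fa_carrier A" if "x \<in> fa_carrier A" for x
    using lin that by (simp add: fa_linear_def)
  have T_add: "T (fa_add A x x') = fa_add A (T x) (T x')"
    if "x \<in> fa_carrier A" "x' \<in> fa_carrier A" for x x'
    using lin that by (simp add: fa_linear_def)
  have T_smul: "T (fa_smul A c x) = fa_smul A c (T x)" if "x \<in> fa_carrier A" for x c
    using lin that by (simp add: fa_linear_def)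
  have "\<phi> (T (\<psi> (fa_add B y y'))) = fa_add B (\<phi> (T (\<psi> y))) (\<phi> (T (\<psi> y')))"
    "\<phi> (T (\<psi> (fa_smul B c y))) = fa_smul B c (\<phi> (T (\<psi> y)))"
    if "y \<in> fa_carrier B" "y' \<in> fa_carrier B" for y y' c
    using that T_in
    by (simp_all add: fa_isometric_iso.map_add[OF inverse] fa_isometric_iso.map_smul[OF inverse]
        inv_maps_to T_add T_smul map_add map_smul)
  then have "fa_linear B B (\<lambda>y. \<phi> (T (\<psi> y)))"
    unfolding fa_linear_def by (simp add: maps_to inv_maps_to T_in)
  moreover have "fa_cont B B (\<lambda>y. \<phi> (T (\<psi> y)))"
    unfolding fa_cont_def
  proof
    fix n
    obtain M C where "finite M"
      and bound: "\<forall>x\<in>fa_carrier A. fa_sn A n (T x) \<le> C * (\<Sum>m\<in>M. fa_sn A m x)"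
      using cont unfolding fa_cont_def by blast
    have "fa_sn B n (\<phi> (T (\<psi> y))) \<le> C * (\<Sum>m\<in>M. fa_sn B m y)" if "y \<in> fa_carrier B" for y
      using bound[rule_format, of "\<psi> y"] that
      by (simp add: map_sn inv_maps_to T_in fa_isometric_iso.map_sn[OF inverse])
    with \<open>finite M\<close> show "\<exists>M C. finite M \<and>
        (\<forall>y\<in>fa_carrier B. fa_sn B n (\<phi> (T (\<psi> y))) \<le> C * (\<Sum>m\<in>M. fa_sn B m y))"
      by blast
  qed
  ultimately show ?thesis by (simp add: fa_cont_op_def)
qed

lemma precompact_image:
  assumes "fa_precompact A K"
  shows "fa_precompact B (\<phi> ` K)"
  unfolding fa_precompact_def
proof (intro conjI allI impI)
  show "\<phi> ` K \<subseteq> fa_carrier B"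
    using assms maps_to by (auto simp: fa_precompact_def)
  fix N :: "nat set" and \<epsilon> :: real assume "finite N \<and> \<epsilon> > 0"
  then obtain F where F: "finite F" "F \<subseteq> fa_carrier A"
    and cover: "K \<subseteq> (\<Union>x\<in>F. {y \<in> fa_carrier A. \<forall>n\<in>N. fa_sn A n (fa_sub A y x) < \<epsilon>})"
    using assms unfolding fa_precompact_def by blast
  have "\<phi> ` K \<subseteq> (\<Union>x\<in>\<phi> ` F. {y \<in> fa_carrier B. \<forall>n\<in>N. fa_sn B n (fa_sub B y x) < \<epsilon>})"
  proof (rule image_subsetI)
    fix k assume "k \<in> K"
    then obtain x where x: "x \<in> F" and k: "k \<in> fa_carrier A"
      and close: "\<forall>n\<in>N. fa_sn A n (fa_sub A k x) < \<epsilon>"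
      using cover by blast
    with F(2) have "\<forall>n\<in>N. fa_sn B n (fa_sub B (\<phi> k) (\<phi> x)) < \<epsilon>"
      by (simp add: sn_sub subsetD)
    then show "\<phi> k \<in> (\<Union>x\<in>\<phi> ` F. {y \<in> fa_carrier B. \<forall>n\<in>N. fa_sn B n (fa_sub B y x) < \<epsilon>})"
      using x k maps_to by blast
  qed
  then show "\<exists>F'. finite F' \<and> F' \<subseteq> fa_carrier B \<and>
      \<phi> ` K \<subseteq> (\<Union>x\<in>F'. {y \<in> fa_carrier B. \<forall>n\<in>N. fa_sn B n (fa_sub B y x) < \<epsilon>})"
    using F maps_to by (intro exI[of _ "\<phi> ` F"]) auto
qed

lemma finite_rank_conj:
  assumes "fa_finite_rank A F"
  shows "fa_finite_rank B (\<lambda>y. \<phi> (F (\<psi> y)))"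
proof -
  obtain G where G: "finite G" "G \<subseteq> fa_carrier A" and span: "F ` fa_carrier A \<subseteq> fa_span A G"
    using assms unfolding fa_finite_rank_def by blast
  have "\<phi> (F (\<psi> y)) \<in> fa_span B (\<phi> ` G)" if y: "y \<in> fa_carrier B" for y
  proof -
    obtain ps where ps: "F (\<psi> y) = fa_lc A ps" "set (map snd ps) \<subseteq> G"
      using span inv_maps_to[OF y] unfolding fa_span_def by blast
    then have "\<phi> (F (\<psi> y)) = fa_lc B (map (\<lambda>(c, x). (c, \<phi> x)) ps)"
      using G(2) lc_closed_and_map_lc by auto
    moreover have "set (map snd (map (\<lambda>(c, x). (c, \<phi> x)) ps)) \<subseteq> \<phi> ` G"
      using ps(2) by auto
    ultimately show ?thesis unfolding fa_span_def by blast
  qed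
  then show ?thesis
    unfolding fa_finite_rank_def using G maps_to by (intro exI[of _ "\<phi> ` G"]) auto
qed

lemma has_AP_transfer:
  assumes "has_AP A"
  shows "has_AP B"
  unfolding has_AP_def
proof (intro allI impI)
  fix T K and N :: "nat set" and \<epsilon> :: real
  assume H: "fa_cont_op B T \<and> fa_precompact B K \<and> finite N \<and> \<epsilon> > 0"
  have "fa_cont_op A (\<lambda>x. \<psi> (T (\<phi> x)))" "fa_precompact A (\<psi> ` K)"
    using H fa_isometric_iso.cont_op_conj[OF inverse] fa_isometric_iso.precompact_image[OF inverse]
    by auto
  then obtain F where F: "fa_cont_op A F" "fa_finite_rank A F"
    and approx: "\<forall>x\<in>\<psi> ` K. \<forall>n\<in>N. fa_sn A n (fa_sub A (\<psi> (T (\<phi> x))) (F x)) < \<epsilon>"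
    using assms H unfolding has_AP_def by blast
  have "fa_sn B n (fa_sub B (T y) (\<phi> (F (\<psi> y)))) < \<epsilon>" if "y \<in> K" "n \<in> N" for y n
  proof -
    have y: "y \<in> fa_carrier B" "\<psi> y \<in> fa_carrier A"
      using H that(1) inv_maps_to by (auto simp: fa_precompact_def)
    have "T y \<in> fa_carrier B" "F (\<psi> y) \<in> fa_carrier A"
      using H F(1) y by (auto simp: fa_cont_op_def fa_linear_def)
    then have "fa_sn B n (fa_sub B (T y) (\<phi> (F (\<psi> y))))
        = fa_sn A n (fa_sub A (\<psi> (T (\<phi> (\<psi> y)))) (F (\<psi> y)))"
      using sn_sub[of "\<psi> (T y)" "F (\<psi> y)" n] by (simp add: inv_right inv_maps_to y)
    then show ?thesis using approx that by auto
  qed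
  then show "\<exists>F'. fa_cont_op B F' \<and> fa_finite_rank B F' \<and>
      (\<forall>x\<in>K. \<forall>n\<in>N. fa_sn B n (fa_sub B (T x) (F' x)) < \<epsilon>)"
    using F cont_op_conj finite_rank_conj by blast
qed

lemma sums_image:
  assumes f: "\<And>k. f k \<in> fa_carrier A" and sums: "fa_sums A f s"
  shows "fa_sums B (\<lambda>k. \<phi> (f k)) (\<phi> s)"
proof -
  have s: "s \<in> fa_carrier A" using sums by (simp add: fa_sums_def)
  have "fa_sn B n (fa_sub B (fa_psum B (\<lambda>k. \<phi> (f k)) N) (\<phi> s))
      = fa_sn A n (fa_sub A (fa_psum A f N) s)" for n N
    using psum_closed_and_map_psum[of f N, OF f] s by (metis sn_sub)
  then show ?thesis
    using sums s maps_to by (simp add: fa_sums_def)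
qed

lemma cont_bilinear_pullback:
  assumes "fa_cont_bilinear B \<beta>"
  shows "fa_cont_bilinear A (\<lambda>u v. \<beta> (\<phi> u) (\<phi> v))"
proof -
  have add: "\<beta> (fa_add B x y) z = \<beta> x z + \<beta> y z" "\<beta> z (fa_add B x y) = \<beta> z x + \<beta> z y"
    if "x \<in> fa_carrier B" "y \<in> fa_carrier B" "z \<in> fa_carrier B" for x y z
    using assms that unfolding fa_cont_bilinear_def by blast+
  have smul: "\<beta> (fa_smul B c x) y = c * \<beta> x y" "\<beta> x (fa_smul B c y) = c * \<beta> x y"
    if "x \<in> fa_carrier B" "y \<in> fa_carrier B" for x y c
    using assms that unfolding fa_cont_bilinear_def by blast+
  obtain M C where "finite M" and bound: "\<And>x y. x \<in> fa_carrier B \<Longrightarrow> y \<in> fa_carrier B \<Longrightarrow>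
      cmod (\<beta> x y) \<le> C * (\<Sum>m\<in>M. fa_sn B m x) * (\<Sum>m\<in>M. fa_sn B m y)"
    using assms unfolding fa_cont_bilinear_def by blast
  moreover have "cmod (\<beta> (\<phi> x) (\<phi> y)) \<le> C * (\<Sum>m\<in>M. fa_sn A m x) * (\<Sum>m\<in>M. fa_sn A m y)"
    if "x \<in> fa_carrier A" "y \<in> fa_carrier A" for x y
    using bound[of "\<phi> x" "\<phi> y"] that by (simp add: maps_to map_sn)
  ultimately show ?thesis
    unfolding fa_cont_bilinear_def
    by (intro conjI ballI allI exI[of _ M] exI[of _ C])
      (simp_all add: maps_to map_add map_smul add smul)
qed

lemma contractible_transfer:
  assumes "fa_contractible A"
  shows "fa_contractible B"
proof -
  obtain x y d where xy: "\<And>k. x k \<in> fa_carrier A" "\<And>k. y k \<in> fa_carrier A"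
    and summ: "\<And>m n. summable (\<lambda>k. fa_sn A m (x k) * fa_sn A n (y k))"
    and d: "fa_sums A (\<lambda>k. fa_mul A (x k) (y k)) d"
    and unit: "\<And>a. a \<in> fa_carrier A \<Longrightarrow> fa_mul A d a = a"
    and diag: "\<And>a \<beta>. a \<in> fa_carrier A \<Longrightarrow> fa_cont_bilinear A \<beta> \<Longrightarrow>
      (\<lambda>k. \<beta> (fa_mul A a (x k)) (y k) - \<beta> (x k) (fa_mul A (y k) a)) sums 0"
    using assms unfolding fa_contractible_def by blast
  have d_in: "d \<in> fa_carrier A" using d by (simp add: fa_sums_def)
  have "fa_sums B (\<lambda>k. fa_mul B (\<phi> (x k)) (\<phi> (y k))) (\<phi> d)"
    using sums_image[of "\<lambda>k. fa_mul A (x k) (y k)", OF _ d] xy by (simp add: mul_closed map_mul)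
  moreover have "fa_mul B (\<phi> d) a = a" if "a \<in> fa_carrier B" for a
    using that unit[of "\<psi> a"] map_mul[OF d_in, of "\<psi> a"] by (simp add: inv_maps_to inv_right)
  moreover have "(\<lambda>k. \<beta> (fa_mul B a (\<phi> (x k))) (\<phi> (y k))
      - \<beta> (\<phi> (x k)) (fa_mul B (\<phi> (y k)) a)) sums 0"
    if a: "a \<in> fa_carrier B" and \<beta>: "fa_cont_bilinear B \<beta>" for a \<beta>
  proof -
    have "fa_mul B a (\<phi> (x k)) = \<phi> (fa_mul A (\<psi> a) (x k))"
      "fa_mul B (\<phi> (y k)) a = \<phi> (fa_mul A (y k) (\<psi> a))" for k
      using a xy by (simp_all add: map_mul inv_maps_to inv_right)
    then show ?thesis
      using diag[OF inv_maps_to[OF a] cont_bilinear_pullback[OF \<beta>]] by simp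
  qed
  moreover have "\<phi> (x k) \<in> fa_carrier B \<and> \<phi> (y k) \<in> fa_carrier B" for k
    using xy by (simp add: maps_to)
  moreover have "summable (\<lambda>k. fa_sn B m (\<phi> (x k)) * fa_sn B n (\<phi> (y k)))" for m n
    using summ xy by (simp add: map_sn)
  ultimately show ?thesis
    unfolding fa_contractible_def
    by (intro exI[of _ "\<lambda>k. \<phi> (x k)"] exI[of _ "\<lambda>k. \<phi> (y k)"] conjI exI[of _ "\<phi> d"]) auto
qed

end

section \<open>The algebra of all complex sequences\<close>

definition CN_seminorm :: "nat \<Rightarrow> (nat \<Rightarrow> complex) \<Rightarrow> real" where
  "CN_seminorm n z = Max ((\<lambda>k. cmod (z k)) ` {..n})"

lemma CN_simps:
  "fa_carrier CN = UNIV" "fa_add CN = (\<lambda>x y k. x k + y k)"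
  "fa_smul CN = (\<lambda>c x k. c * x k)" "fa_zero CN = (\<lambda>k. 0)"
  "fa_mul CN = (\<lambda>x y k. x k * y k)" "fa_sn CN = CN_seminorm"
  by (simp_all add: CN_def CN_seminorm_def fun_eq_iff)

lemma fa_sub_CN: "fa_sub CN x y = (\<lambda>k. x k - y k)"
  by (simp add: fa_sub_def CN_simps)

lemma CN_seminorm_ge: "k \<le> n \<Longrightarrow> cmod (z k) \<le> CN_seminorm n z"
  unfolding CN_seminorm_def by (rule Max_ge) auto

lemma CN_seminorm_le_iff: "CN_seminorm n z \<le> B \<longleftrightarrow> (\<forall>k\<le>n. cmod (z k) \<le> B)"
  unfolding CN_seminorm_def by (subst Max_le_iff) auto

lemma CN_seminorm_nonneg: "0 \<le> CN_seminorm n z"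
  using CN_seminorm_ge[of 0 n z] norm_ge_zero[of "z 0"] by linarith

lemma CN_seminorm_mono:
  assumes "\<And>k. k \<le> n \<Longrightarrow> cmod (z k) \<le> cmod (w k)"
  shows "CN_seminorm n z \<le> CN_seminorm n w"
  using assms CN_seminorm_ge[of _ n w] by (force simp: CN_seminorm_le_iff intro: order_trans)

lemma CN_seminorm_eq_0_iff: "CN_seminorm n z = 0 \<longleftrightarrow> (\<forall>k\<le>n. z k = 0)"
  using CN_seminorm_nonneg[of n z] CN_seminorm_ge[of _ n z]
  by (smt (verit, best) CN_seminorm_le_iff norm_le_zero_iff)

lemma CN_seminorm_Suc: "CN_seminorm (Suc n) z = max (cmod (z (Suc n))) (CN_seminorm n z)"
  unfolding CN_seminorm_def by (simp add: atMost_Suc)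

definition unit_seq :: "nat \<Rightarrow> nat \<Rightarrow> complex" where
  "unit_seq j = (\<lambda>k. if k = j then 1 else 0)"

definition truncate_seq :: "nat \<Rightarrow> (nat \<Rightarrow> complex) \<Rightarrow> nat \<Rightarrow> complex" where
  "truncate_seq m z = (\<lambda>k. if k \<le> m then z k else 0)"

lemma truncate_seq_eq_fa_lc:
  "truncate_seq m z = fa_lc CN (map (\<lambda>j. (z j, unit_seq j)) (rev [0..<Suc m]))"
proof -
  have "fa_lc CN (map (\<lambda>j. (z j, unit_seq j)) (rev [0..<n])) = (\<lambda>k. if k < n then z k else 0)"
    for n
    by (induction n) (auto simp: CN_simps unit_seq_def fun_eq_iff less_Suc_eq)
  from this[of "Suc m"] show ?thesis by (simp add: truncate_seq_def less_Suc_eq_le)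
qed

lemma CN_seminorm_sub_truncate_seq:
  "n \<le> m \<Longrightarrow> CN_seminorm n (fa_sub CN z (truncate_seq m z)) = 0"
  by (simp add: CN_seminorm_eq_0_iff fa_sub_CN truncate_seq_def)

lemma cont_op_truncate_seq:
  assumes "fa_cont_op CN T"
  shows "fa_cont_op CN (\<lambda>x. truncate_seq m (T x))"
proof -
  have lin: "fa_linear CN CN T" and cont: "fa_cont CN CN T"
    using assms by (auto simp: fa_cont_op_def)
  have "fa_linear CN CN (\<lambda>x. truncate_seq m (T x))"
    using lin by (auto simp: fa_linear_def CN_simps truncate_seq_def fun_eq_iff)
  moreover have "CN_seminorm n (truncate_seq m z) \<le> CN_seminorm n z" for n z
    by (rule CN_seminorm_mono) (simp add: truncate_seq_def)
  then have "fa_cont CN CN (\<lambda>x. truncate_seq m (T x))"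
    using cont unfolding fa_cont_def CN_simps by (meson order_trans)
  ultimately show ?thesis by (simp add: fa_cont_op_def)
qed

lemma finite_rank_truncate_seq: "fa_finite_rank CN (\<lambda>x. truncate_seq m (T x))"
  unfolding fa_finite_rank_def
proof (intro exI conjI)
  show "(\<lambda>x. truncate_seq m (T x)) ` fa_carrier CN \<subseteq> fa_span CN (unit_seq ` {..m})"
  proof (rule image_subsetI)
    fix x
    let ?ps = "map (\<lambda>j. (T x j, unit_seq j)) (rev [0..<Suc m])"
    have "set (map snd ?ps) \<subseteq> unit_seq ` {..m}" by auto
    then show "truncate_seq m (T x) \<in> fa_span CN (unit_seq ` {..m})"
      unfolding fa_span_def truncate_seq_eq_fa_lc by blast
  qed
qed (simp_all add: CN_simps)

lemma has_AP_CN: "has_AP CN"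
  unfolding has_AP_def
proof (intro allI impI)
  fix T K and N :: "nat set" and \<epsilon> :: real
  assume H: "fa_cont_op CN T \<and> fa_precompact CN K \<and> finite N \<and> \<epsilon> > 0"
  define m where "m = Max (insert 0 N)"
  have "n \<le> m" if "n \<in> N" for n
    using H that by (simp add: m_def)
  then have "\<forall>x\<in>K. \<forall>n\<in>N. fa_sn CN n (fa_sub CN (T x) (truncate_seq m (T x))) < \<epsilon>"
    using H by (simp add: CN_simps CN_seminorm_sub_truncate_seq)
  then show "\<exists>F. fa_cont_op CN F \<and> fa_finite_rank CN F \<and>
      (\<forall>x\<in>K. \<forall>n\<in>N. fa_sn CN n (fa_sub CN (T x) (F x)) < \<epsilon>)"
    using H cont_op_truncate_seq finite_rank_truncate_seq by blast
qed

lemma unit_seq_idem: "fa_mul CN (unit_seq j) (unit_seq j) = unit_seq j"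
  by (auto simp: CN_simps unit_seq_def fun_eq_iff)

lemma fa_psum_unit_seq: "fa_psum CN unit_seq N = (\<lambda>k. if k < N then 1 else 0)"
  by (induction N) (auto simp: CN_simps unit_seq_def fun_eq_iff less_Suc_eq)

lemma fa_sums_unit_seq: "fa_sums CN (\<lambda>j. fa_mul CN (unit_seq j) (unit_seq j)) (\<lambda>k. 1)"
  unfolding fa_sums_def unit_seq_idem
proof (intro conjI allI)
  fix n
  have "\<forall>N\<ge>Suc n. fa_sn CN n (fa_sub CN (fa_psum CN unit_seq N) (\<lambda>k. 1)) = 0"
    by (simp add: fa_psum_unit_seq fa_sub_CN CN_simps CN_seminorm_eq_0_iff)
  then show "(\<lambda>N. fa_sn CN n (fa_sub CN (fa_psum CN unit_seq N) (\<lambda>k. 1))) \<longlonglongrightarrow> 0"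
    by (intro tendsto_eventually) (auto simp: eventually_sequentially)
qed (simp add: CN_simps)

lemma contractible_CN: "fa_contractible CN"
  unfolding fa_contractible_def
proof (intro exI conjI allI ballI impI)
  show "summable (\<lambda>k. fa_sn CN m (unit_seq k) * fa_sn CN n (unit_seq k))" for m n
    by (rule summable_finite[of "{..m}"]) (auto simp: CN_simps CN_seminorm_eq_0_iff unit_seq_def)
  show "fa_sums CN (\<lambda>k. fa_mul CN (unit_seq k) (unit_seq k)) (\<lambda>k. 1)"
    by (rule fa_sums_unit_seq)
  fix a \<beta> assume "fa_cont_bilinear CN \<beta>"
  moreover have "fa_mul CN a (unit_seq k) = fa_smul CN (a k) (unit_seq k)"
    "fa_mul CN (unit_seq k) a = fa_smul CN (a k) (unit_seq k)" for k
    by (auto simp: CN_simps unit_seq_def fun_eq_iff)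
  ultimately show "(\<lambda>k. \<beta> (fa_mul CN a (unit_seq k)) (unit_seq k)
      - \<beta> (unit_seq k) (fa_mul CN (unit_seq k) a)) sums 0"
    by (simp add: fa_cont_bilinear_def CN_simps)
qed (simp_all add: CN_simps)

section \<open>The ultrapower of the algebra of complex sequences\<close>

definition ultrafilter_of :: "'i set set \<Rightarrow> 'i filter" where
  "ultrafilter_of U = Abs_filter (\<lambda>P. {i. P i} \<in> U)"

definition coord_ulim :: "'i set set \<Rightarrow> ('i \<Rightarrow> nat \<Rightarrow> complex) \<Rightarrow> nat \<Rightarrow> complex" where
  "coord_ulim U x = (\<lambda>k. Lim (ultrafilter_of U) (\<lambda>i. x i k))"

definition ulim_class :: "'i set set \<Rightarrow> (nat \<Rightarrow> complex) \<Rightarrow> ('i \<Rightarrow> nat \<Rightarrow> complex) set" where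
  "ulim_class U z = {x \<in> linf CN. coord_ulim U x = z}"

lemma linf_CN_iff: "x \<in> linf CN \<longleftrightarrow> (\<forall>k. \<exists>B. \<forall>i. cmod (x i k) \<le> B)"
proof
  assume "x \<in> linf CN"
  then have "bdd_above (range (\<lambda>i. CN_seminorm k (x i)))" for k
    by (simp add: linf_def CN_simps)
  then have "\<exists>B. \<forall>i. CN_seminorm k (x i) \<le> B" for k
    by (auto simp: bdd_above_def)
  moreover have "cmod (x i k) \<le> CN_seminorm k (x i)" for i k
    by (rule CN_seminorm_ge) simp
  ultimately show "\<forall>k. \<exists>B. \<forall>i. cmod (x i k) \<le> B"
    by (meson order_trans)
next
  assume "\<forall>k. \<exists>B. \<forall>i. cmod (x i k) \<le> B"
  then obtain B where B: "\<And>k i. cmod (x i k) \<le> B k" by metis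
  have "CN_seminorm n (x i) \<le> Max (B ` {..n})" for n i
    unfolding CN_seminorm_le_iff using B
    by (meson Max_ge atMost_iff finite_atMost finite_imageI image_eqI order_trans)
  then have "bdd_above (range (\<lambda>i. CN_seminorm n (x i)))" for n
    by (intro bdd_aboveI2)
  then show "x \<in> linf CN" by (simp add: linf_def CN_simps)
qed

lemma const_in_linf_CN: "(\<lambda>i. z) \<in> linf CN"
  unfolding linf_CN_iff by blast

lemma linf_CN_closed:
  assumes x: "x \<in> linf CN" and y: "y \<in> linf CN"
  shows "(\<lambda>i k. x i k + y i k) \<in> linf CN" "(\<lambda>i k. x i k * y i k) \<in> linf CN"
proof -
  obtain B1 where B1: "\<And>k i. cmod (x i k) \<le> B1 k" using x unfolding linf_CN_iff by metis
  obtain B2 where B2: "\<And>k i. cmod (y i k) \<le> B2 k" using y unfolding linf_CN_iff by metis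
  have "cmod (x i k + y i k) \<le> B1 k + B2 k" for i k
    using norm_triangle_ineq[of "x i k" "y i k"] add_mono[OF B1 B2] by (rule order_trans)
  then show "(\<lambda>i k. x i k + y i k) \<in> linf CN" unfolding linf_CN_iff by blast
  have "cmod (x i k * y i k) \<le> B1 k * B2 k" for i k
    using B1 B2 by (simp add: norm_mult mult_mono')
  then show "(\<lambda>i k. x i k * y i k) \<in> linf CN" unfolding linf_CN_iff by blast
qed

context
  fixes U :: "'i set set"
  assumes ultrafilter: "ultrafilter_on U"
begin

lemma eventually_ultrafilter_of: "eventually P (ultrafilter_of U) \<longleftrightarrow> {i. P i} \<in> U"
proof -
  have "is_filter (\<lambda>P. {i. P i} \<in> U)"
  proof
    show "{i. True} \<in> U" using ultrafilter by (simp add: ultrafilter_on_def)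
  next
    fix P Q assume "{i. P i} \<in> U" "{i. Q i} \<in> U"
    then have "{i. P i} \<inter> {i. Q i} \<in> U" using ultrafilter unfolding ultrafilter_on_def by blast
    then show "{i. P i \<and> Q i} \<in> U" by (simp add: Collect_conj_eq)
  next
    fix P Q assume "\<forall>x. P x \<longrightarrow> Q x" "{i. P i} \<in> U"
    then show "{i. Q i} \<in> U" using ultrafilter unfolding ultrafilter_on_def
      by (metis (mono_tags, lifting) mem_Collect_eq subsetI)
  qed
  then show ?thesis unfolding ultrafilter_of_def by (simp add: eventually_Abs_filter)
qed

lemma ultrafilter_of_neq_bot: "ultrafilter_of U \<noteq> bot"
  using ultrafilter by (simp add: trivial_limit_def eventually_ultrafilter_of ultrafilter_on_def)

lemma eventually_ultrafilter_of_not: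
  "\<not> eventually P (ultrafilter_of U) \<Longrightarrow> eventually (\<lambda>i. \<not> P i) (ultrafilter_of U)"
  using ultrafilter unfolding eventually_ultrafilter_of ultrafilter_on_def by (metis Collect_neg_eq)

text \<open>A cluster point of the image filter in the compact ball is a limit, because an
  ultrafilter decides every neighbourhood.\<close>
lemma bounded_imp_convergent_ultrafilter_of:
  assumes "\<And>i. cmod (z i) \<le> B"
  shows "\<exists>L. (z \<longlongrightarrow> L) (ultrafilter_of U)"
proof -
  let ?F = "filtermap z (ultrafilter_of U)"
  have "?F \<noteq> bot" using ultrafilter_of_neq_bot by (simp add: filtermap_bot_iff)
  moreover have "eventually (\<lambda>x. x \<in> cball 0 B) ?F"
    using assms by (simp add: eventually_filtermap)
  ultimately obtain L where L: "inf (nhds L) ?F \<noteq> bot"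
    using compact_cball[of "0::complex" B] unfolding compact_filter by blast
  have "eventually (\<lambda>i. z i \<in> S) (ultrafilter_of U)" if "open S" "L \<in> S" for S
  proof (rule ccontr)
    assume "\<not> ?thesis"
    then have "eventually (\<lambda>x. x \<notin> S) ?F"
      by (simp add: eventually_filtermap eventually_ultrafilter_of_not)
    moreover have "eventually (\<lambda>x. x \<in> S) (nhds L)" using that eventually_nhds by blast
    ultimately have "eventually (\<lambda>x. False) (inf (nhds L) ?F)"
      unfolding eventually_inf by blast
    then show False using L by (simp add: eventually_False)
  qed
  then show ?thesis unfolding tendsto_def by blast
qed

lemma Ulim_iff_tendsto: "Ulim U f L \<longleftrightarrow> (f \<longlongrightarrow> L) (ultrafilter_of U)"
  unfolding Ulim_def tendsto_iff dist_real_def eventually_ultrafilter_of by simp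

lemma ulim_eqI: "(f \<longlongrightarrow> L) (ultrafilter_of U) \<Longrightarrow> ulim U f = L"
  unfolding ulim_def Ulim_iff_tendsto using tendsto_unique[OF ultrafilter_of_neq_bot] by blast

lemma tendsto_coord_ulim:
  "x \<in> linf CN \<Longrightarrow> ((\<lambda>i. x i k) \<longlongrightarrow> coord_ulim U x k) (ultrafilter_of U)"
  unfolding linf_CN_iff coord_ulim_def
  by (metis bounded_imp_convergent_ultrafilter_of ultrafilter_of_neq_bot tendsto_Lim)

lemma coord_ulim_unique:
  "(\<And>k. ((\<lambda>i. x i k) \<longlongrightarrow> z k) (ultrafilter_of U)) \<Longrightarrow> coord_ulim U x = z"
  unfolding coord_ulim_def using tendsto_Lim[OF ultrafilter_of_neq_bot] by blast

lemma tendsto_CN_seminorm: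
  "(\<And>k. ((\<lambda>i. x i k) \<longlongrightarrow> z k) (ultrafilter_of U)) \<Longrightarrow>
    ((\<lambda>i. CN_seminorm n (x i)) \<longlongrightarrow> CN_seminorm n z) (ultrafilter_of U)"
proof (induction n)
  case 0
  then show ?case by (simp add: CN_seminorm_def tendsto_norm)
next
  case (Suc n)
  then show ?case unfolding CN_seminorm_Suc by (intro tendsto_max tendsto_norm) auto
qed

lemma urel_CN_iff:
  "(x, y) \<in> urel CN U \<longleftrightarrow> x \<in> linf CN \<and> y \<in> linf CN \<and> coord_ulim U x = coord_ulim U y"
proof -
  have "(\<forall>n. Ulim U (\<lambda>i. fa_sn CN n (fa_sub CN (x i) (y i))) 0)
      \<longleftrightarrow> coord_ulim U x = coord_ulim U y"
    if xy: "x \<in> linf CN" "y \<in> linf CN"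
  proof -
    have lim: "((\<lambda>i. CN_seminorm n (fa_sub CN (x i) (y i)))
        \<longlongrightarrow> CN_seminorm n (\<lambda>k. coord_ulim U x k - coord_ulim U y k)) (ultrafilter_of U)" for n
      unfolding fa_sub_CN by (rule tendsto_CN_seminorm) (intro tendsto_diff tendsto_coord_ulim xy)
    have "Ulim U (\<lambda>i. fa_sn CN n (fa_sub CN (x i) (y i))) 0
        \<longleftrightarrow> CN_seminorm n (\<lambda>k. coord_ulim U x k - coord_ulim U y k) = 0" for n
      unfolding Ulim_iff_tendsto CN_simps using tendsto_unique[OF ultrafilter_of_neq_bot lim] lim
      by metis
    then show ?thesis by (auto simp: CN_seminorm_eq_0_iff fun_eq_iff)
  qed
  then show ?thesis unfolding urel_def by auto
qed

lemma ucls_CN_eq: "x \<in> linf CN \<Longrightarrow> ucls CN U x = ulim_class U (coord_ulim U x)"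
  unfolding ucls_def ulim_class_def using urel_CN_iff by auto

lemma coord_ulim_const: "coord_ulim U (\<lambda>i. z) = z"
  by (rule coord_ulim_unique) simp

lemma carrier_upow_CN: "fa_carrier (upow CN U) = range (ulim_class U)"
proof -
  have "ulim_class U z = urel CN U `` {\<lambda>i. z}" for z
    using ucls_CN_eq[OF const_in_linf_CN] coord_ulim_const unfolding ucls_def by simp
  then have "linf CN // urel CN U = range (ulim_class U)"
    unfolding quotient_def
  proof safe
    fix x :: "'i \<Rightarrow> nat \<Rightarrow> complex" assume "x \<in> linf CN"
    then show "urel CN U `` {x} \<in> range (ulim_class U)"
      using ucls_CN_eq unfolding ucls_def by auto
  next
    fix z
    show "ulim_class U z \<in> (\<Union>x\<in>linf CN. {urel CN U `` {x}})"
      using \<open>ulim_class U z = urel CN U `` {\<lambda>i. z}\<close> const_in_linf_CN by blast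
  qed
  then show ?thesis by (simp add: upow_def)
qed

lemma urep_ulim_class:
  "urep (ulim_class U z) \<in> linf CN \<and> coord_ulim U (urep (ulim_class U z)) = z"
proof -
  have "(\<lambda>i. z) \<in> ulim_class U z"
    unfolding ulim_class_def using const_in_linf_CN coord_ulim_const by simp
  then have "urep (ulim_class U z) \<in> ulim_class U z"
    unfolding urep_def by (rule someI[of "\<lambda>x. x \<in> ulim_class U z"])
  then show ?thesis unfolding ulim_class_def by blast
qed

lemma coord_ulim_pointwise:
  assumes "x \<in> linf CN" "y \<in> linf CN"
  shows "coord_ulim U (\<lambda>i k. x i k + y i k) = (\<lambda>k. coord_ulim U x k + coord_ulim U y k)"
    "coord_ulim U (\<lambda>i k. x i k * y i k) = (\<lambda>k. coord_ulim U x k * coord_ulim U y k)"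
  by (rule coord_ulim_unique; intro tendsto_intros tendsto_coord_ulim assms)+

lemma
  shows upow_CN_add:
      "fa_add (upow CN U) (ulim_class U a) (ulim_class U b) = ulim_class U (\<lambda>k. a k + b k)"
    and upow_CN_smul: "fa_smul (upow CN U) c (ulim_class U a) = ulim_class U (\<lambda>k. c * a k)"
    and upow_CN_mul:
      "fa_mul (upow CN U) (ulim_class U a) (ulim_class U b) = ulim_class U (\<lambda>k. a k * b k)"
proof -
  have x: "urep (ulim_class U a) \<in> linf CN" "coord_ulim U (urep (ulim_class U a)) = a"
    and y: "urep (ulim_class U b) \<in> linf CN" "coord_ulim U (urep (ulim_class U b)) = b"
    using urep_ulim_class by auto
  show "fa_add (upow CN U) (ulim_class U a) (ulim_class U b) = ulim_class U (\<lambda>k. a k + b k)"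
    "fa_mul (upow CN U) (ulim_class U a) (ulim_class U b) = ulim_class U (\<lambda>k. a k * b k)"
    using x y by (simp_all add: upow_def CN_simps ucls_CN_eq linf_CN_closed coord_ulim_pointwise)
  show "fa_smul (upow CN U) c (ulim_class U a) = ulim_class U (\<lambda>k. c * a k)"
    using x linf_CN_closed(2)[OF const_in_linf_CN x(1)]
      coord_ulim_pointwise(2)[OF const_in_linf_CN x(1), of "\<lambda>k. c"]
    by (simp add: upow_def CN_simps ucls_CN_eq coord_ulim_const)
qed

lemma upow_CN_zero: "fa_zero (upow CN U) = ulim_class U (\<lambda>k. 0)"
  using ucls_CN_eq[OF const_in_linf_CN] coord_ulim_const by (simp add: upow_def CN_simps)

lemma upow_CN_sn: "fa_sn (upow CN U) n (ulim_class U a) = CN_seminorm n a"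
proof -
  have "((\<lambda>i. CN_seminorm n (urep (ulim_class U a) i)) \<longlongrightarrow> CN_seminorm n a)
      (ultrafilter_of U)"
    by (rule tendsto_CN_seminorm) (metis tendsto_coord_ulim urep_ulim_class)
  then show ?thesis by (simp add: upow_def CN_simps ulim_eqI)
qed

lemma isometric_iso_upow_CN:
  "fa_isometric_iso CN (upow CN U) (ulim_class U) (\<lambda>X. coord_ulim U (urep X))"
  by unfold_locales
    (auto simp: CN_simps carrier_upow_CN urep_ulim_class upow_CN_add upow_CN_smul upow_CN_mul
      upow_CN_zero upow_CN_sn)

end

theorem mainTheorem14:
  fixes U :: "'i set set"
  assumes "ultrafilter_on U"
    and "countably_incomplete U"
    and "aleph_plus_good CN U"
  shows "fa_isomorphic (upow CN U) CN \<and> has_AP (upow CN U) \<and> fa_contractible (upow CN U)"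
proof -
  have iso: "fa_isometric_iso CN (upow CN U) (ulim_class U) (\<lambda>X. coord_ulim U (urep X))"
    using assms(1) by (rule isometric_iso_upow_CN)
  show ?thesis
    using fa_isometric_iso.isomorphic[OF fa_isometric_iso.inverse[OF iso]]
      fa_isometric_iso.has_AP_transfer[OF iso has_AP_CN]
      fa_isometric_iso.contractible_transfer[OF iso contractible_CN]
    by blast
qed

end
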